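(* Let $m\ge 1$ and $k\in\mathbb N_0$, and let $\mathbf{P}_k(\underline x)$ be an $\mathbb R_{0,m}$-valued homogeneous polynomial of degree $k$ in $\underline x\in\mathbb R^m$ which is monogenic in $\mathbb R^m$, i.e. $\partial_{\underline x}\mathbf{P}_k(\underline x)=0$. Define $\beta_k(0)=1$ and, for $n\ge1$, \[\beta_k(n)=\begin{cases} n, & n \text{ even},\\ 2k+m+n-1, & n\text{ odd},\end{cases}\] and for $0\le j\le n$ put $C_{k,n}(j)=\dfrac{(n-j)!}{\prod_{s=0}^{n-j}\beta_k(s)}$. For $n\ge0$ and $x=(x_0,\underline x)\in\mathbb R^{m+1}$ define \[\mathsf{M}_n^k(x)=\left(\sum_{j=0}^n\binom{n}{j}C_{k,n}(j)\,x_0^j\,\underline x^{\,n-j}\right)\mathbf{P}_k(\underline x).\] Then $\mathsf{M}_0^k(x)=\mathbf{P}_k(\underline x)$, each $\mathsf{M}_n^k$ is an $\mathbb R_{0,m}$-valued polynomial which is monogenic in $\mathbb R^{m+1}$ (i.e. $\partial_x\mathsf{M}_n^k=0$ on $\mathbb R^{m+1}$), and the sequence satisfies the Appell condition \[\tfrac12\,\overline\partial_x\mathsf{M}_n^k(x)=n\,\mathsf{M}_{n-1}^k(x),\qquad n\ge1.\]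
   Context: $\mathbb R_{0,m}$ is the real Clifford algebra generated by an orthonormal basis $e_1,\dots,e_m$ of $\mathbb R^m$ with relations $e_j^2=-1$ and $e_je_k+e_ke_j=0$ for $j\ne k$. A point $x=(x_0,x_1,\dots,x_m)\in\mathbb R^{m+1}$ is identified with the paravector $x_0+\underline x$, where $\underline x=\sum_{j=1}^m x_je_j$; powers $\underline x^{\,n}$ are taken in $\mathbb R_{0,m}$. The Dirac operator is $\partial_{\underline x}=\sum_{j=1}^m e_j\partial_{x_j}$, the generalized Cauchy–Riemann operator is $\partial_x=\partial_{x_0}+\partial_{\underline x}$, and its conjugate is $\overline\partial_x=\partial_{x_0}-\partial_{\underline x}$. A continuously differentiable $\mathbb R_{0,m}$-valued function $f$ is (left) monogenic in an open set of $\mathbb R^{m+1}$ if $\partial_x f=0$ there (operators act from the left), and a function on an open subset of $\mathbb R^m$ is monogenic if $\partial_{\underline x}f=0$. *)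

theory Defs
  imports "HOL-Analysis.Analysis"
begin

text \<open>The index type 'm::{finite,linorder} (finite, linearly ordered)
  plays the role of {1..m}, so m = CARD('m::{finite,linorder}) \<ge> 1.  An element of R_{0,m} is
  a real coefficient function on blades e_A, A a subset of the index type.\<close>

type_synonym 'm cl = "'m::{finite,linorder} set \<Rightarrow> real"

definition blade_sign :: "'m::{finite,linorder} set \<Rightarrow> 'm::{finite,linorder} set \<Rightarrow> real" where
  "blade_sign A B =
     (-1) ^ (card {(a, b). a \<in> A \<and> b \<in> B \<and> b < a} + card (A \<inter> B))"

definition clmul :: "'m::{finite,linorder} cl \<Rightarrow> 'm::{finite,linorder} cl \<Rightarrow> 'm::{finite,linorder} cl" where
  "clmul f g = (\<lambda>C. \<Sum>A\<in>UNIV. \<Sum>B\<in>UNIV.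
      if (A - B) \<union> (B - A) = C then blade_sign A B * f A * g B else 0)"

definition clone :: "'m::{finite,linorder} cl" where
  "clone = (\<lambda>A. if A = {} then 1 else 0)"

definition clbasis :: "'m::{finite,linorder} \<Rightarrow> 'm::{finite,linorder} cl" where
  "clbasis j = (\<lambda>A. if A = {j} then 1 else 0)"

definition clvec :: "real ^ 'm::{finite,linorder} \<Rightarrow> 'm::{finite,linorder} cl" where
  "clvec x = (\<lambda>A. \<Sum>j\<in>UNIV. if A = {j} then x $ j else 0)"

primrec clpow :: "'m::{finite,linorder} cl \<Rightarrow> nat \<Rightarrow> 'm::{finite,linorder} cl" where
  "clpow f 0 = clone"
| "clpow f (Suc n) = clmul f (clpow f n)"

definition cl_C1 :: "('a::euclidean_space \<Rightarrow> 'm::{finite,linorder} cl) \<Rightarrow> bool" where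
  "cl_C1 F \<longleftrightarrow> (\<forall>A. (\<forall>p. (\<lambda>y. F y A) differentiable at p) \<and>
      (\<forall>v. continuous_on UNIV (\<lambda>p. frechet_derivative (\<lambda>y. F y A) (at p) v)))"

definition clpartial :: "('a::euclidean_space \<Rightarrow> 'm::{finite,linorder} cl) \<Rightarrow> 'a \<Rightarrow> 'a \<Rightarrow> 'm::{finite,linorder} cl" where
  "clpartial F v p = (\<lambda>A. frechet_derivative (\<lambda>y. F y A) (at p) v)"

definition dirac :: "(real ^ 'm::{finite,linorder} \<Rightarrow> 'm::{finite,linorder} cl) \<Rightarrow> real ^ 'm::{finite,linorder} \<Rightarrow> 'm::{finite,linorder} cl" where
  "dirac F x = (\<lambda>A. \<Sum>j\<in>UNIV. clmul (clbasis j) (clpartial F (axis j 1) x) A)"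

text \<open>Points of R^{m+1} are pairs (x0, x) with x in R^m.\<close>
definition dirac_part :: "(real \<times> (real ^ 'm::{finite,linorder}) \<Rightarrow> 'm::{finite,linorder} cl) \<Rightarrow> real \<times> (real ^ 'm::{finite,linorder}) \<Rightarrow> 'm::{finite,linorder} cl" where
  "dirac_part F p = (\<lambda>A. \<Sum>j\<in>UNIV. clmul (clbasis j) (clpartial F (0, axis j 1) p) A)"

definition cauchy_riemann :: "(real \<times> (real ^ 'm::{finite,linorder}) \<Rightarrow> 'm::{finite,linorder} cl) \<Rightarrow> real \<times> (real ^ 'm::{finite,linorder}) \<Rightarrow> 'm::{finite,linorder} cl" where
  "cauchy_riemann F p = (\<lambda>A. clpartial F (1, 0) p A + dirac_part F p A)"

definition conj_cauchy_riemann :: "(real \<times> (real ^ 'm::{finite,linorder}) \<Rightarrow> 'm::{finite,linorder} cl) \<Rightarrow> real \<times> (real ^ 'm::{finite,linorder}) \<Rightarrow> 'm::{finite,linorder} cl" where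
  "conj_cauchy_riemann F p = (\<lambda>A. clpartial F (1, 0) p A - dirac_part F p A)"

definition monogenic_Rm :: "(real ^ 'm::{finite,linorder} \<Rightarrow> 'm::{finite,linorder} cl) \<Rightarrow> bool" where
  "monogenic_Rm F \<longleftrightarrow> cl_C1 F \<and> (\<forall>x. dirac F x = (\<lambda>A. 0))"

definition monogenic_Rm1 :: "(real \<times> (real ^ 'm::{finite,linorder}) \<Rightarrow> 'm::{finite,linorder} cl) \<Rightarrow> bool" where
  "monogenic_Rm1 F \<longleftrightarrow> cl_C1 F \<and> (\<forall>p. cauchy_riemann F p = (\<lambda>A. 0))"

definition cl_homogeneous_poly :: "nat \<Rightarrow> (real ^ 'm::{finite,linorder} \<Rightarrow> 'm::{finite,linorder} cl) \<Rightarrow> bool" where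
  "cl_homogeneous_poly k P \<longleftrightarrow> (\<exists>c :: ('m::{finite,linorder} \<Rightarrow> nat) \<Rightarrow> 'm::{finite,linorder} cl.
     \<forall>x. P x = (\<lambda>A. \<Sum>\<alpha>\<in>{\<alpha>. sum \<alpha> UNIV = k}. c \<alpha> A * (\<Prod>i\<in>UNIV. (x $ i) ^ \<alpha> i)))"

definition beta :: "nat \<Rightarrow> nat \<Rightarrow> nat \<Rightarrow> real" where
  "beta m k n = (if n = 0 then 1 else if even n then real n
                 else real (2 * k + m + n - 1))"

definition Ccoef :: "nat \<Rightarrow> nat \<Rightarrow> nat \<Rightarrow> nat \<Rightarrow> real" where
  "Ccoef m k n j = fact (n - j) / (\<Prod>s\<in>{0..n - j}. beta m k s)"

definition Mpoly :: "nat \<Rightarrow> (real ^ 'm::{finite,linorder} \<Rightarrow> 'm::{finite,linorder} cl) \<Rightarrow> nat \<Rightarrow> real \<times> (real ^ 'm::{finite,linorder}) \<Rightarrow> 'm::{finite,linorder} cl" where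
  "Mpoly k P n p = clmul
     (\<lambda>A. \<Sum>j\<in>{0..n}. real (n choose j) * Ccoef CARD('m::{finite,linorder}) k n j * (fst p) ^ j
            * clpow (clvec (snd p)) (n - j) A)
     (P (snd p))"

end

theory Submission
  imports Defs
begin

text \<open>
  Write G_r(x) = x^r P(x).  Since e_i x + x e_i = -2 x_i, the Dirac operator satisfies
  \<partial>(x F) = -m F - 2 E F - x \<partial>F with E the Euler operator.  Applied to F = G_r, which is
  homogeneous of degree k + r, this gives \<partial>G_(r+1) = -\<beta>_k(r+1) G_r by induction on r, because
  \<beta>_k(r+1) + \<beta>_k(r+2) = m + 2(k + r + 1) and \<partial>P = 0.  Writing
  M_n = \<Sum>_j a_(n,j) x_0^j G_(n-j) with a_(n,j) = (n choose j) C_(k,n)(j), the identities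
  (j+1) a_(n+1,j+1) = (n+1) a_(n,j) and \<beta>_k(n+1-j) a_(n+1,j) = (n+1) a_(n,j) show that
  \<partial>_(x_0) M_(n+1) = (n+1) M_n = -\<partial>_x M_(n+1): monogenicity and the Appell property at once.
\<close>

section \<open>The Clifford product\<close>

definition bool_sign :: "bool \<Rightarrow> real" where
  "bool_sign P = (if P then -1 else 1)"

lemma power_card_eq_prod_bool_sign:
  assumes "finite U" "S \<subseteq> U"
  shows "(-1::real) ^ card S = (\<Prod>x\<in>U. bool_sign (x \<in> S))"
proof -
  have "(\<Prod>x\<in>U. bool_sign (x \<in> S)) = (\<Prod>x\<in>U \<inter> {x. x \<in> S}. -1) * (\<Prod>x\<in>U \<inter> - {x. x \<in> S}. 1)"
    using assms by (simp add: bool_sign_def prod.If_cases)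
  also have "U \<inter> {x. x \<in> S} = S" using assms by auto
  finally show ?thesis by simp
qed

definition inversion_sign :: "'m::{finite,linorder} set \<Rightarrow> 'm set \<Rightarrow> real" where
  "inversion_sign A B = (\<Prod>(a, b)\<in>UNIV. bool_sign (a \<in> A \<and> b \<in> B \<and> b < a))"

definition overlap_sign :: "'m::{finite,linorder} set \<Rightarrow> 'm set \<Rightarrow> real" where
  "overlap_sign A B = (\<Prod>c\<in>UNIV. bool_sign (c \<in> A \<and> c \<in> B))"

lemma blade_sign_eq_inversion_overlap: "blade_sign A B = inversion_sign A B * overlap_sign A B"
proof -
  have "(-1::real) ^ card {(a, b). a \<in> A \<and> b \<in> B \<and> b < a} = inversion_sign A B"
    unfolding inversion_sign_def
    by (subst power_card_eq_prod_bool_sign[of UNIV]) (auto simp: case_prod_beta intro!: prod.cong)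
  moreover have "(-1::real) ^ card (A \<inter> B) = overlap_sign A B"
    unfolding overlap_sign_def by (subst power_card_eq_prod_bool_sign[of UNIV]) auto
  ultimately show ?thesis unfolding blade_sign_def power_add by simp
qed

lemma mem_sym_diff_iff: "x \<in> sym_diff A B \<longleftrightarrow> (x \<in> A) \<noteq> (x \<in> B)"
  by auto

text \<open>Both factors of the blade sign are multiplicative in each argument with respect to the
  symmetric difference; this makes the blade sign a 2-cocycle and the product associative.\<close>

lemma inversion_sign_sym_diff_left: "inversion_sign (sym_diff A B) C = inversion_sign A C * inversion_sign B C"
  unfolding inversion_sign_def mem_sym_diff_iff
  by (simp add: case_prod_beta prod.distrib[symmetric]) (auto intro!: prod.cong simp: bool_sign_def)

lemma inversion_sign_sym_diff_right: "inversion_sign A (sym_diff B C) = inversion_sign A B * inversion_sign A C"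
  unfolding inversion_sign_def mem_sym_diff_iff
  by (simp add: case_prod_beta prod.distrib[symmetric]) (auto intro!: prod.cong simp: bool_sign_def)

lemma overlap_sign_sym_diff_left: "overlap_sign (sym_diff A B) C = overlap_sign A C * overlap_sign B C"
  unfolding overlap_sign_def mem_sym_diff_iff
  by (simp add: prod.distrib[symmetric]) (auto intro!: prod.cong simp: bool_sign_def)

lemma overlap_sign_sym_diff_right: "overlap_sign A (sym_diff B C) = overlap_sign A B * overlap_sign A C"
  unfolding overlap_sign_def mem_sym_diff_iff
  by (simp add: prod.distrib[symmetric]) (auto intro!: prod.cong simp: bool_sign_def)

lemma blade_sign_cocycle:
  "blade_sign A B * blade_sign (sym_diff A B) E = blade_sign A (sym_diff B E) * blade_sign B E"
  unfolding blade_sign_eq_inversion_overlap inversion_sign_sym_diff_left inversion_sign_sym_diff_right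
    overlap_sign_sym_diff_left overlap_sign_sym_diff_right
  by (simp add: mult_ac)

lemma sym_diff_cancel_left: "sym_diff A (sym_diff A B) = B"
  by auto

lemma clmul_eq_sum: "clmul f g C = (\<Sum>A\<in>UNIV. blade_sign A (sym_diff A C) * f A * g (sym_diff A C))"
proof -
  have "\<And>A B. sym_diff A B = C \<longleftrightarrow> B = sym_diff A C" by auto
  then have "clmul f g C = (\<Sum>A\<in>UNIV. \<Sum>B\<in>UNIV. if B = sym_diff A C then blade_sign A B * f A * g B else 0)"
    unfolding clmul_def by presburger
  then show ?thesis by simp
qed

lemma sum_reindex_sym_diff: "(\<Sum>D\<in>(UNIV::'a::finite set set). h D) = (\<Sum>B\<in>UNIV. h (sym_diff A B))"
  by (rule sum.reindex_bij_witness[of _ "sym_diff A" "sym_diff A"]) (auto simp: sym_diff_cancel_left)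

lemma clmul_assoc: "clmul (clmul f g) h = clmul f (clmul g h)"
proof
  fix C :: "'a::{finite,linorder} set"
  let ?S = "\<lambda>A. blade_sign A (sym_diff A C)"
  have "clmul (clmul f g) h C =
      (\<Sum>D\<in>UNIV. \<Sum>A\<in>UNIV. ?S D * (blade_sign A (sym_diff A D) * f A * g (sym_diff A D)) * h (sym_diff D C))"
    unfolding clmul_eq_sum[of "clmul f g"] clmul_eq_sum[of f g]
    by (simp add: sum_distrib_left sum_distrib_right)
  also have "\<dots> =
      (\<Sum>A\<in>UNIV. \<Sum>D\<in>UNIV. ?S D * (blade_sign A (sym_diff A D) * f A * g (sym_diff A D)) * h (sym_diff D C))"
    by (rule sum.swap)
  also have "\<dots> = (\<Sum>A\<in>UNIV. \<Sum>B\<in>UNIV.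
      ?S (sym_diff A B) * (blade_sign A B * f A * g B) * h (sym_diff (sym_diff A B) C))"
  proof (rule sum.cong[OF refl])
    fix A
    show "(\<Sum>D\<in>UNIV. ?S D * (blade_sign A (sym_diff A D) * f A * g (sym_diff A D)) * h (sym_diff D C))
      = (\<Sum>B\<in>UNIV. ?S (sym_diff A B) * (blade_sign A B * f A * g B) * h (sym_diff (sym_diff A B) C))"
      by (subst sum_reindex_sym_diff[where A = A]) (simp add: sym_diff_cancel_left)
  qed
  also have "\<dots> = (\<Sum>A\<in>UNIV. \<Sum>B\<in>UNIV. ?S A * f A * (blade_sign B (sym_diff B (sym_diff A C)) * g B
      * h (sym_diff B (sym_diff A C))))"
  proof (intro sum.cong refl)
    fix A B
    have assoc: "sym_diff (sym_diff A B) C = sym_diff B (sym_diff A C)" by auto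
    have "blade_sign A B * blade_sign (sym_diff A B) (sym_diff B (sym_diff A C))
        = ?S A * blade_sign B (sym_diff B (sym_diff A C))"
      using blade_sign_cocycle[of A B "sym_diff B (sym_diff A C)"] by (simp only: sym_diff_cancel_left)
    then show "?S (sym_diff A B) * (blade_sign A B * f A * g B) * h (sym_diff (sym_diff A B) C)
        = ?S A * f A * (blade_sign B (sym_diff B (sym_diff A C)) * g B * h (sym_diff B (sym_diff A C)))"
      unfolding assoc by (simp only: mult_ac)
  qed
  also have "\<dots> = clmul f (clmul g h) C"
    unfolding clmul_eq_sum[of f "clmul g h"] clmul_eq_sum[of g h] sum_distrib_left
    by (simp only: mult.assoc)
  finally show "clmul (clmul f g) h C = clmul f (clmul g h) C" .
qed

lemma clmul_clone_left [simp]: "clmul clone f = f"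
  unfolding clmul_eq_sum clone_def by (simp add: blade_sign_def if_distrib if_distribR cong: if_cong)

lemma clmul_add_right: "clmul h (\<lambda>A. f A + g A) C = clmul h f C + clmul h g C"
  unfolding clmul_eq_sum by (simp add: algebra_simps sum.distrib)

lemma clmul_diff_left: "clmul (\<lambda>A. f A - g A) h C = clmul f h C - clmul g h C"
  unfolding clmul_eq_sum by (simp add: algebra_simps sum_subtractf)

lemma clmul_scale_left: "clmul (\<lambda>A. c * f A) h C = c * clmul f h C"
  unfolding clmul_eq_sum by (simp add: algebra_simps sum_distrib_left)

lemma clmul_scale_right: "clmul h (\<lambda>A. c * f A) C = c * clmul h f C"
  unfolding clmul_eq_sum by (simp add: algebra_simps sum_distrib_left)

lemma clmul_uminus_left: "clmul (\<lambda>A. - f A) h C = - clmul f h C"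
  unfolding clmul_eq_sum by (simp add: sum_negf)

lemma clmul_uminus_right: "clmul h (\<lambda>A. - f A) C = - clmul h f C"
  unfolding clmul_eq_sum by (simp add: sum_negf)

lemma clmul_zero_right: "clmul h (\<lambda>A. 0) C = 0"
  unfolding clmul_eq_sum by simp

lemma clmul_sum_left: "clmul (\<lambda>A. \<Sum>j\<in>J. f j A) h C = (\<Sum>j\<in>J. clmul (f j) h C)"
  unfolding clmul_eq_sum sum_distrib_right sum_distrib_left by (rule sum.swap)

lemma clmul_sum_right: "clmul h (\<lambda>A. \<Sum>j\<in>J. f j A) C = (\<Sum>j\<in>J. clmul h (f j) C)"
  unfolding clmul_eq_sum sum_distrib_right sum_distrib_left by (subst sum.swap) (simp add: mult_ac)

lemma clmul_clbasis_clbasis: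
  "clmul (clbasis i) (clbasis j) C = (if C = sym_diff {i} {j} then blade_sign {i} {j} else 0)"
proof -
  have "clmul (clbasis i) (clbasis j) C =
      (\<Sum>A\<in>UNIV. if A = {i} then blade_sign A (sym_diff A C) * clbasis j (sym_diff A C) else 0)"
    unfolding clmul_eq_sum clbasis_def by (intro sum.cong) auto
  then show ?thesis unfolding clbasis_def by auto
qed

lemma blade_sign_singletons:
  "blade_sign {i} {j} = (if j < i then -1 else if i = j then -1 else 1)"
proof -
  have "{(a, b). a \<in> {i} \<and> b \<in> {j} \<and> b < a} = (if j < i then {(i, j)} else {})" by auto
  then show ?thesis unfolding blade_sign_def by (auto simp: Int_insert_left)
qed

lemma clmul_clbasis_sq: "clmul (clbasis i) (clbasis i) = (\<lambda>C. - clone C)"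
  by (auto simp: clmul_clbasis_clbasis blade_sign_singletons clone_def)

lemma clmul_clbasis_anticomm:
  "i \<noteq> j \<Longrightarrow> clmul (clbasis i) (clbasis j) C + clmul (clbasis j) (clbasis i) C = 0"
  by (auto simp: clmul_clbasis_clbasis blade_sign_singletons Un_commute)

lemma clvec_eq_sum_clbasis: "clvec x = (\<lambda>A. \<Sum>j\<in>UNIV. x $ j * clbasis j A)"
  unfolding clvec_def clbasis_def by (intro ext sum.cong) auto

lemma clmul_clbasis_clvec_anticomm:
  "clmul (clbasis i) (clvec x) C + clmul (clvec x) (clbasis i) C = - 2 * x $ i * clone C"
proof -
  have "clmul (clbasis i) (clvec x) C + clmul (clvec x) (clbasis i) C
      = (\<Sum>j\<in>UNIV. x $ j * (clmul (clbasis i) (clbasis j) C + clmul (clbasis j) (clbasis i) C))"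
    unfolding clvec_eq_sum_clbasis clmul_sum_left clmul_sum_right clmul_scale_left clmul_scale_right
    by (simp add: sum.distrib algebra_simps)
  also have "\<dots> = (\<Sum>j\<in>UNIV. if j = i then x $ i * (- 2 * clone C) else 0)"
    by (intro sum.cong refl) (auto simp: clmul_clbasis_anticomm clmul_clbasis_sq)
  finally show ?thesis by simp
qed

section \<open>Clifford-valued polynomials and their derivatives\<close>

lemma real_polynomial_function_has_derivative:
  fixes f :: "'a::real_normed_vector \<Rightarrow> real"
  assumes "real_polynomial_function f"
  obtains f' where "\<And>v. real_polynomial_function (\<lambda>p. f' p v)" "\<And>p. (f has_derivative f' p) (at p)"
proof -
  have "\<exists>f'. (\<forall>v. real_polynomial_function (\<lambda>p. f' p v)) \<and> (\<forall>p. (f has_derivative f' p) (at p))"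
    using assms
  proof (induction f)
    case (linear f)
    then show ?case
      by (rule_tac x="\<lambda>p. f" in exI) (auto intro: bounded_linear_imp_has_derivative)
  next
    case (const c)
    then show ?case by (rule_tac x="\<lambda>p v. 0" in exI) auto
  next
    case (add f g)
    then obtain f' g' where "\<forall>v. real_polynomial_function (\<lambda>p. f' p v)" "\<forall>p. (f has_derivative f' p) (at p)"
      "\<forall>v. real_polynomial_function (\<lambda>p. g' p v)" "\<forall>p. (g has_derivative g' p) (at p)" by blast
    then show ?case
      by (rule_tac x="\<lambda>p v. f' p v + g' p v" in exI) (auto intro: has_derivative_add)
  next
    case (mult f g)
    then obtain f' g' where "\<forall>v. real_polynomial_function (\<lambda>p. f' p v)" "\<forall>p. (f has_derivative f' p) (at p)"
      "\<forall>v. real_polynomial_function (\<lambda>p. g' p v)" "\<forall>p. (g has_derivative g' p) (at p)" by blast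
    then show ?case using mult.hyps
      by (rule_tac x="\<lambda>p v. f p * g' p v + f' p v * g p" in exI)
        (auto intro!: has_derivative_mult real_polynomial_function.intros(3,4))
  qed
  then show thesis using that by blast
qed

definition cl_poly :: "('a::real_normed_vector \<Rightarrow> 'm::{finite,linorder} cl) \<Rightarrow> bool" where
  "cl_poly F \<longleftrightarrow> (\<forall>A. real_polynomial_function (\<lambda>p. F p A))"

lemma cl_poly_imp_cl_C1:
  fixes F :: "'a::euclidean_space \<Rightarrow> 'm::{finite,linorder} cl"
  assumes "cl_poly F"
  shows "cl_C1 F"
  unfolding cl_C1_def
proof (intro allI conjI)
  fix A v p
  obtain f' where f': "\<And>v. real_polynomial_function (\<lambda>p. f' p v)" "\<And>p. ((\<lambda>y. F y A) has_derivative f' p) (at p)"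
    using assms real_polynomial_function_has_derivative unfolding cl_poly_def by blast
  show "(\<lambda>y. F y A) differentiable at p" using f'(2) unfolding differentiable_def by blast
  have "(\<lambda>p. frechet_derivative (\<lambda>y. F y A) (at p) v) = (\<lambda>p. f' p v)"
    using f'(2) frechet_derivative_at by metis
  then show "continuous_on UNIV (\<lambda>p. frechet_derivative (\<lambda>y. F y A) (at p) v)"
    using f'(1) continuous_real_polymonial_function continuous_at_imp_continuous_on by metis
qed

lemma cl_poly_has_derivative:
  assumes "cl_poly F"
  shows "((\<lambda>y. F y A) has_derivative frechet_derivative (\<lambda>y. F y A) (at p)) (at p)"
  using assms differentiable_at_real_polynomial_function frechet_derivative_works
  unfolding cl_poly_def by blast

lemma cl_poly_has_real_derivative_line:
  fixes F :: "'a::euclidean_space \<Rightarrow> 'm::{finite,linorder} cl"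
  assumes "cl_poly F"
  shows "((\<lambda>t. F (p + t *\<^sub>R v) A) has_real_derivative clpartial F v p A) (at 0)"
proof -
  let ?L = "frechet_derivative (\<lambda>y. F y A) (at p)"
  have d: "((\<lambda>y. F y A) has_derivative ?L) (at p)" by (rule cl_poly_has_derivative[OF assms])
  have line: "((\<lambda>t. p + t *\<^sub>R v) has_derivative (\<lambda>h. h *\<^sub>R v)) (at 0)"
    by (auto intro!: derivative_eq_intros)
  have "((\<lambda>t. F (p + t *\<^sub>R v) A) has_derivative (\<lambda>h. ?L (h *\<^sub>R v))) (at 0)"
    using has_derivative_compose[OF line, of "\<lambda>y. F y A" ?L] d by simp
  moreover have "(\<lambda>h. ?L (h *\<^sub>R v)) = (\<lambda>h. h * ?L v)"
    using d has_derivative_bounded_linear by (auto simp: linear_simps)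
  ultimately show ?thesis
    unfolding has_field_derivative_def clpartial_def by (simp add: mult_commute_abs)
qed

lemma clpartial_eqI:
  fixes F :: "'a::euclidean_space \<Rightarrow> 'm::{finite,linorder} cl"
  assumes "cl_poly F" "\<And>A. ((\<lambda>t. F (p + t *\<^sub>R v) A) has_real_derivative D A) (at 0)"
  shows "clpartial F v p = D"
  using DERIV_unique[OF cl_poly_has_real_derivative_line[OF assms(1)] assms(2)] by blast

lemma clpartial_eq_sum_axis:
  fixes F :: "real ^ 'n \<Rightarrow> 'm::{finite,linorder} cl"
  assumes "cl_poly F"
  shows "clpartial F x p A = (\<Sum>i\<in>UNIV. x $ i * clpartial F (axis i 1) p A)"
proof -
  let ?L = "frechet_derivative (\<lambda>y. F y A) (at p)"
  have lin: "linear ?L" using cl_poly_has_derivative[OF assms] has_derivative_linear by blast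
  have "?L x = ?L (\<Sum>i\<in>UNIV. x $ i *\<^sub>R axis i 1)"
    using basis_expansion[of x] by (simp add: scalar_mult_eq_scaleR)
  also have "\<dots> = (\<Sum>i\<in>UNIV. x $ i * ?L (axis i 1))"
    using lin by (simp add: linear_sum linear_scale)
  finally show ?thesis unfolding clpartial_def .
qed

lemma clpartial_euler:
  fixes F :: "'a::euclidean_space \<Rightarrow> 'm::{finite,linorder} cl"
  assumes "cl_poly F" "\<And>s y. F (s *\<^sub>R y) = (\<lambda>A. s ^ d * F y A)"
  shows "clpartial F x x = (\<lambda>A. real d * F x A)"
proof (rule clpartial_eqI[OF assms(1)])
  fix A
  have "(\<lambda>t. F (x + t *\<^sub>R x) A) = (\<lambda>t. (1 + t) ^ d * F x A)"
    using assms(2)[of "1 + _" x] by (simp add: algebra_simps)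
  moreover have "((\<lambda>t. (1 + t) ^ d * F x A) has_real_derivative real d * F x A) (at 0)"
    by (auto intro!: derivative_eq_intros)
  ultimately show "((\<lambda>t. F (x + t *\<^sub>R x) A) has_real_derivative real d * F x A) (at 0)" by simp
qed

definition cl_has_real_derivative :: "(real \<Rightarrow> 'm::{finite,linorder} cl) \<Rightarrow> 'm cl \<Rightarrow> real \<Rightarrow> bool" where
  "cl_has_real_derivative F D t \<longleftrightarrow> (\<forall>A. ((\<lambda>s. F s A) has_real_derivative D A) (at t))"

lemma cl_has_real_derivative_clmul:
  assumes "cl_has_real_derivative F D t" "cl_has_real_derivative G E t"
  shows "cl_has_real_derivative (\<lambda>s. clmul (F s) (G s)) (\<lambda>C. clmul D (G t) C + clmul (F t) E C) t"
  unfolding cl_has_real_derivative_def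
proof
  fix C
  have "((\<lambda>s. \<Sum>A\<in>UNIV. blade_sign A (sym_diff A C) * F s A * G s (sym_diff A C)) has_real_derivative
     (\<Sum>A\<in>UNIV. blade_sign A (sym_diff A C) * D A * G t (sym_diff A C)
        + blade_sign A (sym_diff A C) * F t A * E (sym_diff A C))) (at t)"
    using assms unfolding cl_has_real_derivative_def
    by (auto intro!: derivative_eq_intros simp: algebra_simps)
  then show "((\<lambda>s. clmul (F s) (G s) C) has_real_derivative clmul D (G t) C + clmul (F t) E C) (at t)"
    unfolding clmul_eq_sum by (simp add: sum.distrib)
qed

lemma cl_poly_const: "cl_poly (\<lambda>p. c)"
  unfolding cl_poly_def by (simp add: real_polynomial_function.intros(2))

lemma cl_poly_clmul:
  assumes "cl_poly F" "cl_poly G"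
  shows "cl_poly (\<lambda>p. clmul (F p) (G p))"
  using assms unfolding cl_poly_def clmul_eq_sum
  by (intro allI real_polynomial_function_sum real_polynomial_function.intros(2,4)) auto

lemma cl_poly_clpow: "cl_poly F \<Longrightarrow> cl_poly (\<lambda>p. clpow (F p) n)"
  by (induction n) (simp_all add: cl_poly_const cl_poly_clmul)

lemma real_polynomial_function_vec_nth: "real_polynomial_function (\<lambda>x. x $ j)"
  by (rule real_polynomial_function.intros(1)) (rule bounded_linear_vec_nth)

lemma cl_poly_clvec: "cl_poly clvec"
proof -
  have e: "\<And>A j (x::real^'m). (if A = {j} then x $ j else 0) = (if A = {j} then 1 else 0) * x $ j"
    by simp
  show ?thesis unfolding cl_poly_def clvec_def e
    by (intro allI real_polynomial_function_sum real_polynomial_function.intros(2,4)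
        real_polynomial_function_vec_nth) simp_all
qed

lemma cl_poly_compose:
  assumes "cl_poly F" "polynomial_function g"
  shows "cl_poly (\<lambda>p. F (g p))"
  using assms real_polynomial_function_compose[OF assms(2)] unfolding cl_poly_def o_def by blast

lemma cl_homogeneous_poly_imp_cl_poly:
  assumes "cl_homogeneous_poly k (P :: real ^ 'm::{finite,linorder} \<Rightarrow> 'm cl)"
  shows "cl_poly P"
proof -
  obtain c :: "('m \<Rightarrow> nat) \<Rightarrow> 'm cl"
    where c: "\<And>x. P x = (\<lambda>A. \<Sum>\<alpha>\<in>{\<alpha>. sum \<alpha> UNIV = k}. c \<alpha> A * (\<Prod>i\<in>UNIV. (x $ i) ^ \<alpha> i))"
    using assms unfolding cl_homogeneous_poly_def by blast
  show ?thesis unfolding cl_poly_def c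
    by (cases "finite {\<alpha>::'m \<Rightarrow> nat. sum \<alpha> UNIV = k}")
      (auto intro!: real_polynomial_function_sum real_polynomial_function_prod
        real_polynomial_function_power real_polynomial_function.intros(2,4)
        real_polynomial_function_vec_nth)
qed

lemma cl_homogeneous_poly_scaleR:
  assumes "cl_homogeneous_poly k (P :: real ^ 'm::{finite,linorder} \<Rightarrow> 'm cl)"
  shows "P (s *\<^sub>R x) = (\<lambda>A. s ^ k * P x A)"
proof -
  obtain c :: "('m \<Rightarrow> nat) \<Rightarrow> 'm cl"
    where c: "\<And>x. P x = (\<lambda>A. \<Sum>\<alpha>\<in>{\<alpha>. sum \<alpha> UNIV = k}. c \<alpha> A * (\<Prod>i\<in>UNIV. (x $ i) ^ \<alpha> i))"
    using assms unfolding cl_homogeneous_poly_def by blast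
  have "(\<Prod>i\<in>UNIV. ((s *\<^sub>R x) $ i) ^ \<alpha> i) = s ^ k * (\<Prod>i\<in>UNIV. (x $ i) ^ \<alpha> i)"
    if "sum \<alpha> UNIV = k" for \<alpha> :: "'m \<Rightarrow> nat"
    using that by (simp add: power_mult_distrib prod.distrib power_sum[symmetric])
  then show ?thesis unfolding c by (auto simp: sum_distrib_left mult_ac intro!: sum.cong)
qed

lemma clvec_scaleR: "clvec (s *\<^sub>R x) = (\<lambda>A. s * clvec x A)"
  unfolding clvec_def by (auto simp: sum_distrib_left intro!: sum.cong)

lemma clvec_add: "clvec (x + y) = (\<lambda>A. clvec x A + clvec y A)"
  unfolding clvec_def by (auto simp: sum.distrib[symmetric] intro!: sum.cong)

lemma clvec_axis: "clvec (axis i 1) = clbasis i"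
proof -
  have e: "\<And>A j. (if A = {j} then axis i 1 $ j else 0) = (if j = i then (if A = {i} then 1 else 0) else 0)"
    by (simp add: axis_def)
  show ?thesis unfolding clvec_def clbasis_def e by simp
qed

lemma clpow_scale: "clpow (\<lambda>A. s * f A) n = (\<lambda>A. s ^ n * clpow f n A)"
  by (induction n) (auto simp: clone_def clmul_scale_left clmul_scale_right)

section \<open>The Dirac operator on \<open>x\<^sup>r P(x)\<close>\<close>

definition vec_power_mul ::
    "(real ^ 'm::{finite,linorder} \<Rightarrow> 'm::{finite,linorder} cl) \<Rightarrow> nat \<Rightarrow> real ^ 'm::{finite,linorder} \<Rightarrow> 'm::{finite,linorder} cl" where
  "vec_power_mul P r x = clmul (clpow (clvec x) r) (P x)"

lemma vec_power_mul_0 [simp]: "vec_power_mul P 0 x = P x"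
  by (simp add: vec_power_mul_def)

lemma vec_power_mul_Suc: "vec_power_mul P (Suc r) x = clmul (clvec x) (vec_power_mul P r x)"
  by (simp add: vec_power_mul_def clmul_assoc)

lemma cl_poly_vec_power_mul: "cl_poly P \<Longrightarrow> cl_poly (vec_power_mul P r)"
  unfolding vec_power_mul_def by (intro cl_poly_clmul cl_poly_clpow cl_poly_clvec)

lemma vec_power_mul_scaleR:
  assumes "cl_homogeneous_poly k P"
  shows "vec_power_mul P r (s *\<^sub>R x) = (\<lambda>A. s ^ (r + k) * vec_power_mul P r x A)"
  unfolding vec_power_mul_def cl_homogeneous_poly_scaleR[OF assms] clvec_scaleR clpow_scale
  by (rule ext) (simp add: clmul_scale_left clmul_scale_right power_add)

lemma clpartial_clvec_mul:
  fixes F :: "real ^ 'm::{finite,linorder} \<Rightarrow> 'm cl"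
  assumes "cl_poly F"
  shows "clpartial (\<lambda>y. clmul (clvec y) (F y)) w x
       = (\<lambda>C. clmul (clvec w) (F x) C + clmul (clvec x) (clpartial F w x) C)"
proof (rule clpartial_eqI)
  show "cl_poly (\<lambda>y. clmul (clvec y) (F y))" by (intro cl_poly_clmul cl_poly_clvec assms)
  have "cl_has_real_derivative (\<lambda>t. clvec (x + t *\<^sub>R w)) (clvec w) 0"
    unfolding cl_has_real_derivative_def clvec_add clvec_scaleR by (auto intro!: derivative_eq_intros)
  moreover have "cl_has_real_derivative (\<lambda>t. F (x + t *\<^sub>R w)) (clpartial F w x) 0"
    unfolding cl_has_real_derivative_def using cl_poly_has_real_derivative_line[OF assms] by blast
  ultimately show "((\<lambda>t. clmul (clvec (x + t *\<^sub>R w)) (F (x + t *\<^sub>R w)) A) has_real_derivative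
      clmul (clvec w) (F x) A + clmul (clvec x) (clpartial F w x) A) (at 0)" for A
    using cl_has_real_derivative_clmul unfolding cl_has_real_derivative_def by fastforce
qed

text \<open>Move e_i past x using e_i x = -x e_i - 2 x_i, and collect \<Sum>_i x_i \<partial>_i F by Euler's identity.\<close>

lemma dirac_clvec_mul:
  fixes F :: "real ^ 'm::{finite,linorder} \<Rightarrow> 'm cl"
  assumes "cl_poly F" "\<And>s y. F (s *\<^sub>R y) = (\<lambda>A. s ^ d * F y A)"
  shows "dirac (\<lambda>y. clmul (clvec y) (F y)) x
     = (\<lambda>C. - real CARD('m) * F x C - clmul (clvec x) (dirac F x) C - 2 * real d * F x C)"
proof
  fix C
  let ?X = "clvec x" and ?dF = "\<lambda>i. clpartial F (axis i 1) x"
  have sq: "clmul (clbasis i) (clmul (clbasis i) (F x)) C = - F x C" for i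
    by (simp add: clmul_assoc[symmetric] clmul_clbasis_sq clmul_uminus_left)
  have anticomm: "clmul (clbasis i) (clmul ?X (?dF i)) C
      = - 2 * x $ i * ?dF i C - clmul ?X (clmul (clbasis i) (?dF i)) C" for i
  proof -
    have "clmul (clbasis i) ?X = (\<lambda>A. (- 2 * x $ i) * clone A - clmul ?X (clbasis i) A)"
      using clmul_clbasis_clvec_anticomm[of i x] by (intro ext) (simp add: algebra_simps eq_diff_eq)
    then show ?thesis
      by (simp add: clmul_assoc[symmetric] clmul_diff_left clmul_scale_left clmul_uminus_left)
  qed
  have "dirac (\<lambda>y. clmul (clvec y) (F y)) x C
     = (\<Sum>i\<in>UNIV. clmul (clbasis i) (\<lambda>C. clmul (clbasis i) (F x) C + clmul ?X (?dF i) C) C)"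
    unfolding dirac_def clpartial_clvec_mul[OF assms(1)] clvec_axis ..
  also have "\<dots> = (\<Sum>i\<in>UNIV. - F x C + (- 2 * x $ i * ?dF i C - clmul ?X (clmul (clbasis i) (?dF i)) C))"
    by (simp only: clmul_add_right sq anticomm)
  also have "\<dots> = - real CARD('m) * F x C - 2 * (\<Sum>i\<in>UNIV. x $ i * ?dF i C)
      - (\<Sum>i\<in>UNIV. clmul ?X (clmul (clbasis i) (?dF i)) C)"
    by (simp add: sum.distrib sum_subtractf sum_distrib_left algebra_simps)
  also have "(\<Sum>i\<in>UNIV. x $ i * ?dF i C) = real d * F x C"
    using clpartial_eq_sum_axis[OF assms(1)] clpartial_euler[OF assms] by metis
  also have "(\<Sum>i\<in>UNIV. clmul ?X (clmul (clbasis i) (?dF i)) C) = clmul ?X (dirac F x) C"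
    unfolding dirac_def clmul_sum_right ..
  finally show "dirac (\<lambda>y. clmul (clvec y) (F y)) x C
      = - real CARD('m) * F x C - clmul ?X (dirac F x) C - 2 * real d * F x C"
    by simp
qed

lemma beta_Suc_Suc: "beta m k (Suc (Suc r)) = real m + 2 * (real (Suc r) + real k) - beta m k (Suc r)"
  by (cases "even r") (simp_all add: beta_def)

lemma dirac_vec_power_mul_Suc:
  fixes P :: "real ^ 'm::{finite,linorder} \<Rightarrow> 'm cl"
  assumes hom: "cl_homogeneous_poly k P" and mono: "monogenic_Rm P"
  shows "dirac (vec_power_mul P (Suc r)) x = (\<lambda>C. - beta CARD('m) k (Suc r) * vec_power_mul P r x C)"
proof (induction r arbitrary: x)
  case 0
  have "dirac P x = (\<lambda>A. 0)" using mono unfolding monogenic_Rm_def by blast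
  then show ?case
    unfolding vec_power_mul_Suc vec_power_mul_0
      dirac_clvec_mul[OF cl_homogeneous_poly_imp_cl_poly[OF hom] cl_homogeneous_poly_scaleR[OF hom]]
    by (simp add: clmul_zero_right beta_def algebra_simps)
next
  case (Suc r)
  show ?case
    unfolding vec_power_mul_Suc[of P "Suc r", abs_def]
      dirac_clvec_mul[OF cl_poly_vec_power_mul[OF cl_homogeneous_poly_imp_cl_poly[OF hom]]
        vec_power_mul_scaleR[OF hom]] Suc.IH
    by (rule ext, simp only: clmul_uminus_right clmul_scale_right vec_power_mul_Suc[symmetric])
      (simp add: beta_Suc_Suc algebra_simps)
qed

section \<open>The Appell sequence\<close>

definition appell_coef :: "nat \<Rightarrow> nat \<Rightarrow> nat \<Rightarrow> nat \<Rightarrow> real" where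
  "appell_coef m k n j = real (n choose j) * Ccoef m k n j"

lemma beta_pos: "0 < m \<Longrightarrow> 0 < beta m k s"
  by (auto simp: beta_def)

lemma appell_coef_Suc_Suc:
  "appell_coef m k (Suc n) (Suc j) * real (Suc j) = real (Suc n) * appell_coef m k n j"
proof -
  have "real (Suc j) * real (Suc n choose Suc j) = real (Suc n) * real (n choose j)"
    by (metis of_nat_mult Suc_times_binomial)
  then show ?thesis unfolding appell_coef_def Ccoef_def by (simp add: mult_ac)
qed

lemma appell_coef_Suc_mult_beta:
  assumes "0 < m" "j \<le> n"
  shows "appell_coef m k (Suc n) j * beta m k (Suc n - j) = real (Suc n) * appell_coef m k n j"
proof -
  let ?B = "\<lambda>r. \<Prod>s\<in>{0..r}. beta m k s"
  have Suc_diff: "Suc n - j = Suc (n - j)" using assms by simp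
  have beta_nz: "beta m k (Suc (n - j)) \<noteq> 0" using beta_pos[OF assms(1)] by (metis less_irrefl)
  have binom: "real (Suc (n - j)) * real (Suc n choose j) = real (Suc n) * real (n choose j)"
    using binomial_absorb_comp[of "Suc n" j] Suc_diff by (metis of_nat_mult diff_Suc_1)
  have "appell_coef m k (Suc n) j * beta m k (Suc n - j)
      = real (Suc n choose j) * (fact (Suc (n - j)) / (?B (n - j) * beta m k (Suc (n - j))))
        * beta m k (Suc (n - j))"
    unfolding appell_coef_def Ccoef_def Suc_diff by (simp add: prod.atLeast0_atMost_Suc)
  also have "\<dots> = (real (Suc (n - j)) * real (Suc n choose j)) * (fact (n - j) / ?B (n - j))"
    using beta_nz by (simp add: fact_Suc mult_ac)
  also have "\<dots> = real (Suc n) * appell_coef m k n j"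
    unfolding binom appell_coef_def Ccoef_def by (simp add: mult_ac)
  finally show ?thesis .
qed

lemma Mpoly_eq_sum:
  fixes P :: "real ^ 'm::{finite,linorder} \<Rightarrow> 'm cl"
  shows "Mpoly k P n p
    = (\<lambda>C. \<Sum>j\<in>{0..n}. appell_coef CARD('m) k n j * fst p ^ j * vec_power_mul P (n - j) (snd p) C)"
  unfolding Mpoly_def appell_coef_def vec_power_mul_def
  by (rule ext) (simp add: clmul_sum_left clmul_scale_left)

lemma cl_poly_Mpoly:
  fixes P :: "real ^ 'm::{finite,linorder} \<Rightarrow> 'm cl"
  assumes "cl_poly P"
  shows "cl_poly (Mpoly k P n)"
proof -
  have G: "cl_poly (\<lambda>p::real \<times> (real ^ 'm::{finite,linorder}). vec_power_mul P r (snd p))" for r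
    by (rule cl_poly_compose[OF cl_poly_vec_power_mul[OF assms]])
      (rule polynomial_function_bounded_linear[OF bounded_linear_snd])
  have fst: "real_polynomial_function (\<lambda>p::real \<times> (real ^ 'm::{finite,linorder}). fst p)"
    by (rule real_polynomial_function.intros(1)) (rule bounded_linear_fst)
  show ?thesis using G unfolding cl_poly_def Mpoly_eq_sum
    by (intro allI real_polynomial_function_sum real_polynomial_function.intros(2,4)
        real_polynomial_function_power fst) auto
qed

lemma clpartial_time_Mpoly:
  fixes P :: "real ^ 'm::{finite,linorder} \<Rightarrow> 'm cl"
  assumes "cl_poly P"
  shows "clpartial (Mpoly k P n) (1, 0) p = (\<lambda>C. \<Sum>j\<in>{0..n}.
      appell_coef CARD('m) k n j * (real j * fst p ^ (j - 1)) * vec_power_mul P (n - j) (snd p) C)"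
proof (rule clpartial_eqI[OF cl_poly_Mpoly[OF assms]])
  show "((\<lambda>t. Mpoly k P n (p + t *\<^sub>R (1, 0)) C) has_real_derivative (\<Sum>j\<in>{0..n}.
      appell_coef CARD('m) k n j * (real j * fst p ^ (j - 1)) * vec_power_mul P (n - j) (snd p) C)) (at 0)"
    for C
    unfolding Mpoly_eq_sum
    by (auto intro!: derivative_eq_intros) (intro sum.cong refl; simp add: mult_ac)
qed

lemma dirac_part_Mpoly:
  fixes P :: "real ^ 'm::{finite,linorder} \<Rightarrow> 'm cl"
  assumes "cl_poly P"
  shows "dirac_part (Mpoly k P n) p C = (\<Sum>j\<in>{0..n}.
      appell_coef CARD('m) k n j * fst p ^ j * dirac (vec_power_mul P (n - j)) (snd p) C)"
proof -
  have partial_space: "clpartial (Mpoly k P n) (0, w) p = (\<lambda>C. \<Sum>j\<in>{0..n}.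
      appell_coef CARD('m) k n j * fst p ^ j * clpartial (vec_power_mul P (n - j)) w (snd p) C)" for w
  proof (rule clpartial_eqI[OF cl_poly_Mpoly[OF assms]])
    note line = cl_poly_has_real_derivative_line[OF cl_poly_vec_power_mul[OF assms]]
    show "((\<lambda>t. Mpoly k P n (p + t *\<^sub>R (0, w)) C) has_real_derivative (\<Sum>j\<in>{0..n}.
        appell_coef CARD('m) k n j * fst p ^ j * clpartial (vec_power_mul P (n - j)) w (snd p) C)) (at 0)"
      for C
      unfolding Mpoly_eq_sum
      by (auto intro!: derivative_eq_intros line) (intro sum.cong refl; simp add: mult_ac)
  qed
  then show ?thesis
    unfolding dirac_part_def partial_space dirac_def clmul_sum_right clmul_scale_right
    by (simp add: sum_distrib_left sum.swap[of _ UNIV])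
qed

lemma clpartial_time_Mpoly_Suc:
  fixes P :: "real ^ 'm::{finite,linorder} \<Rightarrow> 'm cl"
  assumes "cl_poly P"
  shows "clpartial (Mpoly k P (Suc n)) (1, 0) p C = real (Suc n) * Mpoly k P n p C"
proof -
  let ?a = "appell_coef CARD('m) k" and ?G = "\<lambda>r. vec_power_mul P r (snd p) C"
  have "clpartial (Mpoly k P (Suc n)) (1, 0) p C
      = (\<Sum>j\<in>{0..Suc n}. ?a (Suc n) j * (real j * fst p ^ (j - 1)) * ?G (Suc n - j))"
    unfolding clpartial_time_Mpoly[OF assms] ..
  also have "\<dots> = (\<Sum>j\<in>{0..n}. (?a (Suc n) (Suc j) * real (Suc j)) * fst p ^ j * ?G (n - j))"
    by (subst sum.atLeast0_atMost_Suc_shift) (simp add: mult_ac)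
  also have "\<dots> = real (Suc n) * Mpoly k P n p C"
    unfolding appell_coef_Suc_Suc Mpoly_eq_sum by (simp add: sum_distrib_left mult_ac)
  finally show ?thesis .
qed

lemma dirac_part_Mpoly_Suc:
  fixes P :: "real ^ 'm::{finite,linorder} \<Rightarrow> 'm cl"
  assumes hom: "cl_homogeneous_poly k P" and mono: "monogenic_Rm P"
  shows "dirac_part (Mpoly k P (Suc n)) p C = - real (Suc n) * Mpoly k P n p C"
proof -
  let ?a = "appell_coef CARD('m) k" and ?G = "\<lambda>r. vec_power_mul P r (snd p) C"
  have dirac_P: "dirac (vec_power_mul P 0) x = (\<lambda>A. 0)" for x
    using mono unfolding monogenic_Rm_def by (simp add: vec_power_mul_0[abs_def])
  have "dirac_part (Mpoly k P (Suc n)) p C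
      = (\<Sum>j\<in>{0..Suc n}. ?a (Suc n) j * fst p ^ j * dirac (vec_power_mul P (Suc n - j)) (snd p) C)"
    unfolding dirac_part_Mpoly[OF cl_homogeneous_poly_imp_cl_poly[OF hom]] ..
  also have "\<dots> = (\<Sum>j\<in>{0..n}. - ((?a (Suc n) j * beta CARD('m) k (Suc n - j)) * fst p ^ j * ?G (n - j)))"
  proof (simp add: sum.atLeast0_atMost_Suc dirac_P, intro sum.cong refl)
    fix j assume "j \<in> {0..n}"
    then show "?a (Suc n) j * fst p ^ j * dirac (vec_power_mul P (Suc n - j)) (snd p) C
        = - (?a (Suc n) j * beta CARD('m) k (Suc n - j) * fst p ^ j * ?G (n - j))"
      using dirac_vec_power_mul_Suc[OF hom mono, of "n - j"] by (simp add: Suc_diff_le)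
  qed
  also have "\<dots> = (\<Sum>j\<in>{0..n}. - (real (Suc n) * ?a n j * fst p ^ j * ?G (n - j)))"
    by (intro sum.cong refl) (simp add: appell_coef_Suc_mult_beta)
  also have "\<dots> = - real (Suc n) * Mpoly k P n p C"
    unfolding Mpoly_eq_sum mult_minus_left sum_distrib_left sum_negf by (simp only: mult.assoc)
  finally show ?thesis .
qed

lemma Mpoly_0: "Mpoly k P 0 p = P (snd p)"
  by (simp add: Mpoly_def Ccoef_def beta_def)

lemma monogenic_Rm1_Mpoly:
  assumes "cl_homogeneous_poly k P" "monogenic_Rm P"
  shows "monogenic_Rm1 (Mpoly k P n)"
  unfolding monogenic_Rm1_def
proof (intro conjI allI ext)
  have P: "cl_poly P" by (rule cl_homogeneous_poly_imp_cl_poly[OF assms(1)])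
  show "cl_C1 (Mpoly k P n)" by (rule cl_poly_imp_cl_C1[OF cl_poly_Mpoly[OF P]])
  fix p C
  show "cauchy_riemann (Mpoly k P n) p C = 0"
  proof (cases n)
    case 0
    then show ?thesis
      using assms(2) unfolding cauchy_riemann_def clpartial_time_Mpoly[OF P] dirac_part_Mpoly[OF P]
      by (simp add: monogenic_Rm_def vec_power_mul_0[abs_def])
  next
    case (Suc n')
    then show ?thesis unfolding cauchy_riemann_def
      by (simp add: clpartial_time_Mpoly_Suc[OF P] dirac_part_Mpoly_Suc[OF assms] algebra_simps)
  qed
qed

lemma conj_cauchy_riemann_Mpoly_Suc:
  assumes "cl_homogeneous_poly k P" "monogenic_Rm P"
  shows "conj_cauchy_riemann (Mpoly k P (Suc n)) p C = 2 * real (Suc n) * Mpoly k P n p C"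
  unfolding conj_cauchy_riemann_def
  by (simp add: clpartial_time_Mpoly_Suc[OF cl_homogeneous_poly_imp_cl_poly[OF assms(1)]]
      dirac_part_Mpoly_Suc[OF assms] algebra_simps)

theorem mainTheorem1:
  fixes k :: nat and P :: "real ^ 'm::{finite,linorder} \<Rightarrow> 'm cl"
  assumes "cl_homogeneous_poly k P"
    and "monogenic_Rm P"
  shows "(\<forall>p. Mpoly k P 0 p = P (snd p))
    \<and> (\<forall>n. (\<forall>A. polynomial_function (\<lambda>p. Mpoly k P n p A)) \<and> monogenic_Rm1 (Mpoly k P n))
    \<and> (\<forall>n\<ge>1. \<forall>p A. (1/2) * conj_cauchy_riemann (Mpoly k P n) p A = real n * Mpoly k P (n - 1) p A)"
proof (intro conjI allI impI)
  fix n :: nat and A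
  show "polynomial_function (\<lambda>p. Mpoly k P n p A)"
    using cl_poly_Mpoly[OF cl_homogeneous_poly_imp_cl_poly[OF assms(1)]]
    unfolding cl_poly_def real_polynomial_function_eq by blast
next
  fix n :: nat and p A
  assume "1 \<le> n"
  then obtain n' where "n = Suc n'" using not0_implies_Suc by fastforce
  then show "(1/2) * conj_cauchy_riemann (Mpoly k P n) p A = real n * Mpoly k P (n - 1) p A"
    using conj_cauchy_riemann_Mpoly_Suc[OF assms] by simp
qed (simp_all add: Mpoly_0 monogenic_Rm1_Mpoly[OF assms])

end
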